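(* In the setting below with $P=\mathfrak S$, the worst case setting and the normalized error criterion: $\{S_d\}$ is strongly polynomially tractable if and only if $\lambda\in\ell_\tau$ for some $\tau>0$, $\lambda_1>\lambda_2$, and $d-\#I_d\in O(1)$. Moreover, $\{S_d\}$ is polynomially tractable if and only if $\lambda\in\ell_\tau$ for some $\tau>0$ and $d-\#I_d\in O(\ln d)$.
   Context: Setting: $S_1:H_1\to G_1$ is a compact linear operator between real Hilbert spaces ($H_1$ infinite-dimensional separable); $\lambda=(\lambda_m)_{m\in\mathbb N}$, $\lambda_1\ge\lambda_2\ge\dots\ge0$, are the eigenvalues of $S_1^\dagger S_1$. $S_d=S_1^{\otimes d}:H_1^{\otimes d}\to G_1^{\otimes d}$. For each $d$ fix $\emptyset\ne I_d=\{i_1<\dots<i_{a_d}\}\subset\{1,\dots,d\}$ ($I_1=\{1\}$), put $a_d=\#I_d$, $b_d=d-a_d$, and fix one type $P\in\{\mathfrak S,\mathfrak A\}$ for all $d$; the problem $\{S_d\}$ is the family of restrictions of $S_d$ to the $I_d$-symmetric subspace (if $P=\mathfrak S$) or $I_d$-antisymmetric subspace (if $P=\mathfrak A$) of $H_1^{\otimes d}$, i.e. the range of $\frac1{a_d!}\sum_{\pi}(\pm1)U_\pi$, the sum over permutations $\pi$ of $\{1,\dots,d\}$ fixing all points outside $I_d$, $U_\pi(f_1\otimes\cdots\otimes f_d)=f_{\pi(1)}\otimes\cdots\otimes f_{\pi(d)}$, sign $(-1)^{|\pi|}$ used for $\mathfrak A$. Let $\nabla_d=\{k\in\mathbb N^d:k_{i_1}\le\dots\le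 k_{i_{a_d}}\}$ for $P=\mathfrak S$ and with strict inequalities for $P=\mathfrak A$; $\lambda_{d,k}=\prod_{l=1}^d\lambda_{k_l}$; $\psi:\mathbb N\to\nabla_d$ a bijection with $\lambda_{d,\psi(1)}\ge\lambda_{d,\psi(2)}\ge\cdots$. These are exactly the eigenvalues of $S_d^\dagger S_d$ on the subspace, and the information complexity is $n(\epsilon,d)=\#\{k\in\nabla_d:\lambda_{d,k}>\epsilon^2\}$, the initial error $\epsilon^{\rm init}_d=\sqrt{\lambda_{d,\psi(1)}}$ (equal to $\lambda_1^{d/2}$ if $P=\mathfrak S$, and $\sqrt{\lambda_1^{b_d}\lambda_1\lambda_2\cdots\lambda_{a_d}}$ if $P=\mathfrak A$). Normalized error criterion: polynomially tractable means $\exists C,p>0,q\ge0$ with $n(\epsilon'\epsilon_d^{\rm init},d)\le C(\epsilon')^{-p}d^q$ for all $d\in\mathbb N,\epsilon'\in(0,1]$; strongly polynomially tractable: this with $q=0$. Standing assumptions: $\lambda_2>0$ and $\epsilon_d^{\rm init}>0$ for all $d$. $\ell_\tau$: sequences with $\sum_m\lambda_m^\tau<\infty$. *)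

theory Defs
  imports "HOL-Analysis.Analysis" "HOL-Library.Landau_Symbols"
begin

text \<open>Eigenvalues lam 1 \<ge> lam 2 \<ge> ... of S_1^* S_1 (index 0 unused).
  Multi-indices k in N^d are represented as functions nat \<Rightarrow> nat with
  k l \<ge> 1 for l in {1..d} and k l = 0 outside {1..d}.\<close>

definition nabla_sym :: "(nat \<Rightarrow> nat set) \<Rightarrow> nat \<Rightarrow> (nat \<Rightarrow> nat) set" where
  "nabla_sym I d = {k. (\<forall>l\<in>{1..d}. 1 \<le> k l) \<and> (\<forall>l. l \<notin> {1..d} \<longrightarrow> k l = 0)
      \<and> (\<forall>i\<in>I d. \<forall>j\<in>I d. i \<le> j \<longrightarrow> k i \<le> k j)}"

definition lam_dk :: "(nat \<Rightarrow> real) \<Rightarrow> nat \<Rightarrow> (nat \<Rightarrow> nat) \<Rightarrow> real" where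
  "lam_dk lam d k = (\<Prod>l\<in>{1..d}. lam (k l))"

definition info_compl :: "(nat \<Rightarrow> real) \<Rightarrow> (nat \<Rightarrow> nat set) \<Rightarrow> real \<Rightarrow> nat \<Rightarrow> nat" where
  "info_compl lam I eps d = card {k \<in> nabla_sym I d. lam_dk lam d k > eps\<^sup>2}"

definition eps_init :: "(nat \<Rightarrow> real) \<Rightarrow> (nat \<Rightarrow> nat set) \<Rightarrow> nat \<Rightarrow> real" where
  "eps_init lam I d = sqrt (Sup (lam_dk lam d ` nabla_sym I d))"

definition poly_tractable :: "(nat \<Rightarrow> real) \<Rightarrow> (nat \<Rightarrow> nat set) \<Rightarrow> bool" where
  "poly_tractable lam I \<longleftrightarrow> (\<exists>C p q. C > 0 \<and> p > 0 \<and> q \<ge> 0 \<and>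
     (\<forall>d\<ge>1. \<forall>e\<in>{0<..1::real}.
        real (info_compl lam I (e * eps_init lam I d) d) \<le> C * e powr (-p) * real d powr q))"

definition strongly_poly_tractable :: "(nat \<Rightarrow> real) \<Rightarrow> (nat \<Rightarrow> nat set) \<Rightarrow> bool" where
  "strongly_poly_tractable lam I \<longleftrightarrow> (\<exists>C p. C > 0 \<and> p > 0 \<and>
     (\<forall>d\<ge>1. \<forall>e\<in>{0<..1::real}.
        real (info_compl lam I (e * eps_init lam I d) d) \<le> C * e powr (-p)))"

end

theory Submission
  imports Defs
begin

(* Dividing by the initial error reduces everything to the normalized eigenvalues
   mu m = lam m / lam 1, so n(e * eps_init, d) counts the I_d-monotone multi-indices k with
   prod_l mu (k l) > e^2 (info_compl_normalized).

   Upper bound (info_compl_upper): a monotone multi-index is determined by its level profile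
   (how many symmetrized coordinates lie below each level 2..M) together with its truncation
   (the entries above M and the unsymmetrized entries).  There are at most (|I_d|+1)^(M-1)
   profiles, and a Chebyshev-type estimate bounds the truncations by e^(-p) S^(d-|I_d|+j),
   S = sum_m mu(m)^tau, where j counts the entries above M, each contributing a factor
   mu <= rho < 1.  Choosing M = 1 when lam 1 > lam 2 yields strong polynomial tractability
   when d - |I_d| is bounded; otherwise (2d)^(M-1) and S^(O(ln d)) are polynomial in d.

   Lower bounds: dimension 1 gives lam in l_tau; if lam 1 = lam 2 there are d+1 maximal
   eigenvalues; raising s unsymmetrized coordinates to 2 gives (d-|I_d| choose s) large
   eigenvalues, which forces d - |I_d| = O(ln d) (bounded when q = 0). *)

text \<open>Two down-closed subsets of a finite linearly ordered set with the same cardinality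
  coincide.  This is what makes a monotone multi-index recoverable from its level counts.\<close>

lemma downsets_eq_if_card_eq:
  fixes J X Y :: "nat set"
  assumes "finite J" "X \<subseteq> J" "Y \<subseteq> J"
    and down_X: "\<And>x y. x \<in> X \<Longrightarrow> y \<in> J \<Longrightarrow> y \<le> x \<Longrightarrow> y \<in> X"
    and down_Y: "\<And>x y. x \<in> Y \<Longrightarrow> y \<in> J \<Longrightarrow> y \<le> x \<Longrightarrow> y \<in> Y"
    and "card X = card Y"
  shows "X = Y"
proof -
  have "X \<subseteq> Y \<or> Y \<subseteq> X"
  proof (rule ccontr)
    assume "\<not> ?thesis"
    then obtain x y where "x \<in> X" "x \<notin> Y" "y \<in> Y" "y \<notin> X" by blast
    then show False
      using down_X[of x y] down_Y[of y x] assms(2,3) by (cases "x \<le> y") auto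
  qed
  moreover have "finite X" "finite Y" using assms(1-3) finite_subset by blast+
  ultimately show ?thesis using assms(6) card_subset_eq by metis
qed

lemma prod_le_prod_subset:
  fixes f :: "'a \<Rightarrow> real"
  assumes "finite T" "S \<subseteq> T" "\<And>x. x \<in> T \<Longrightarrow> 0 \<le> f x \<and> f x \<le> 1"
  shows "prod f T \<le> prod f S"
proof -
  have "prod f T = prod f (T - S) * prod f S"
    by (rule prod.subset_diff[OF assms(2,1)])
  also have "\<dots> \<le> 1 * prod f S"
    using assms by (intro mult_right_mono prod_le_1 prod_nonneg) auto
  finally show ?thesis by simp
qed

lemma factor_gt_if_prod_gt:
  fixes f :: "'a \<Rightarrow> real"
  assumes "finite T" "l \<in> T" "\<And>x. x \<in> T \<Longrightarrow> 0 \<le> f x \<and> f x \<le> 1" "prod f T > eps"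
  shows "f l > eps"
  using prod_le_prod_subset[of T "{l}" f] assms by auto

section \<open>Counting multi-indices with a large product\<close>

definition superlevel :: "(nat \<Rightarrow> real) \<Rightarrow> nat set \<Rightarrow> real \<Rightarrow> (nat \<Rightarrow> nat) set" where
  "superlevel mu D eps =
     {h. (\<forall>l. l \<notin> D \<longrightarrow> h l = 0) \<and> (\<forall>l\<in>D. 1 \<le> h l) \<and> (\<Prod>l\<in>D. mu (h l)) > eps}"

context
  fixes mu :: "nat \<Rightarrow> real" and D :: "nat set" and eps :: real
  assumes D: "finite D"
    and mu01: "\<And>m. m \<ge> 1 \<Longrightarrow> 0 \<le> mu m \<and> mu m \<le> 1"
    and lim: "mu \<longlonglongrightarrow> 0"
    and eps: "eps > 0"
begin

lemma superlevel_memD: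
  assumes "h \<in> superlevel mu D eps"
  shows "\<And>l. l \<notin> D \<Longrightarrow> h l = 0" "\<And>l. l \<in> D \<Longrightarrow> 1 \<le> h l" "(\<Prod>l\<in>D. mu (h l)) > eps"
  using assms unfolding superlevel_def by auto

text \<open>Since \<open>mu \<longrightarrow> 0\<close> and every factor of a product \<open>> eps\<close> is itself \<open>> eps\<close>, the entries
  of elements of a superlevel set are uniformly bounded.\<close>

lemma superlevel_entries_bounded:
  obtains K where "\<And>h l. h \<in> superlevel mu D eps \<Longrightarrow> l \<in> D \<Longrightarrow> h l < K"
proof -
  obtain K where K: "\<And>m. m \<ge> K \<Longrightarrow> mu m < eps"
    using order_tendstoD(2)[OF lim eps] by (auto simp: eventually_sequentially)
  have "h l < K" if h: "h \<in> superlevel mu D eps" and l: "l \<in> D" for h l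
  proof (rule ccontr)
    assume "\<not> h l < K"
    then have "mu (h l) < eps" using K by simp
    moreover have "mu (h l) > eps"
    proof (rule factor_gt_if_prod_gt[OF D l])
      show "0 \<le> mu (h x) \<and> mu (h x) \<le> 1" if "x \<in> D" for x
        using mu01 superlevel_memD(2)[OF h that] by blast
    qed (use superlevel_memD(3)[OF h] in simp)
    ultimately show False by simp
  qed
  then show ?thesis using that by blast
qed

lemma superlevel_finite: "finite (superlevel mu D eps)"
proof -
  obtain K where K: "\<And>h l. h \<in> superlevel mu D eps \<Longrightarrow> l \<in> D \<Longrightarrow> h l < K"
    using superlevel_entries_bounded by blast
  have "superlevel mu D eps \<subseteq> {f. \<forall>x. (x \<in> D \<longrightarrow> f x \<in> {..<K}) \<and> (x \<notin> D \<longrightarrow> f x = 0)}"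
    using K superlevel_memD(1) by blast
  moreover have "finite {f. \<forall>x. (x \<in> D \<longrightarrow> f x \<in> {..<K}) \<and> (x \<notin> D \<longrightarrow> (f x :: nat) = 0)}"
    by (rule finite_set_of_finite_funs) (use D in auto)
  ultimately show ?thesis by (rule finite_subset)
qed

text \<open>Chebyshev-type bound: each element of the superlevel set contributes at least \<open>1\<close> to
  \<open>eps^(-\<tau>) * \<Prod>l. mu(h l)^\<tau>\<close>, and summing this weight over a box containing the whole
  superlevel set factorizes into \<open>(\<Sum>m. mu(m)^\<tau>)^|D|\<close>.\<close>

lemma superlevel_card_bound:
  assumes tau: "\<tau> > 0" and summ: "summable (\<lambda>m. mu (Suc m) powr \<tau>)"
  shows "real (card (superlevel mu D eps)) \<le> eps powr (-\<tau>) * (\<Sum>m. mu (Suc m) powr \<tau>) ^ card D"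
proof -
  define H where "H = superlevel mu D eps"
  define T where "T = (\<Sum>m. mu (Suc m) powr \<tau>)"
  obtain K where K: "\<And>h l. h \<in> H \<Longrightarrow> l \<in> D \<Longrightarrow> h l < K"
    using superlevel_entries_bounded unfolding H_def by blast
  define P where "P = PiE D (\<lambda>_. {Suc 0..<Suc K})"
  have restr_in_P: "(\<lambda>h. restrict h D) ` H \<subseteq> P"
  proof
    fix g assume "g \<in> (\<lambda>h. restrict h D) ` H"
    then obtain h where h: "h \<in> H" "g = restrict h D" by blast
    have "h l \<in> {Suc 0..<Suc K}" if "l \<in> D" for l
      using K[OF h(1) that] superlevel_memD(2)[of h l] h(1) that unfolding H_def by auto
    then show "g \<in> P" unfolding P_def h(2) by (simp add: restrict_PiE_iff)
  qed
  have inj: "inj_on (\<lambda>h. restrict h D) H"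
  proof (rule inj_onI)
    fix h h' assume "h \<in> H" "h' \<in> H" "restrict h D = restrict h' D"
    then show "h = h'"
      using superlevel_memD(1) unfolding H_def by (intro ext) (metis restrict_apply')
  qed
  have finP: "finite P" unfolding P_def using D by (intro finite_PiE) auto
  define w where "w g = (\<Prod>l\<in>D. mu (g l) powr \<tau>) / eps powr \<tau>" for g :: "nat \<Rightarrow> nat"
  have w_ge_1: "1 \<le> w (restrict h D)" if "h \<in> H" for h
  proof -
    have "eps powr \<tau> < (\<Prod>l\<in>D. mu (h l)) powr \<tau>"
      using superlevel_memD(3)[of h] that eps tau unfolding H_def by (intro powr_less_mono2) auto
    also have "\<dots> = (\<Prod>l\<in>D. mu (restrict h D l) powr \<tau>)"
      by (simp add: prod_powr_distrib)
    finally show ?thesis using eps unfolding w_def by simp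
  qed
  have partial_sum_le: "(\<Sum>m\<in>{Suc 0..<Suc K}. mu m powr \<tau>) \<le> T"
    unfolding T_def sum.shift_bounds_Suc_ivl using summ by (intro sum_le_suminf) auto
  have sum_over_P: "(\<Sum>g\<in>P. \<Prod>l\<in>D. mu (g l) powr \<tau>) = (\<Sum>m\<in>{Suc 0..<Suc K}. mu m powr \<tau>) ^ card D"
    unfolding P_def using D by (subst prod_sum_PiE[symmetric]) auto
  have "real (card H) = (\<Sum>g\<in>(\<lambda>h. restrict h D) ` H. 1)" using card_image[OF inj] by simp
  also have "\<dots> \<le> (\<Sum>g\<in>(\<lambda>h. restrict h D) ` H. w g)" using w_ge_1 by (intro sum_mono) auto
  also have "\<dots> \<le> (\<Sum>g\<in>P. w g)"
    using restr_in_P finP unfolding w_def by (intro sum_mono2 divide_nonneg_nonneg prod_nonneg) auto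
  also have "\<dots> = (\<Sum>m\<in>{Suc 0..<Suc K}. mu m powr \<tau>) ^ card D / eps powr \<tau>"
    unfolding w_def by (simp add: sum_divide_distrib[symmetric] sum_over_P)
  also have "\<dots> \<le> T ^ card D / eps powr \<tau>"
    using eps by (intro divide_right_mono power_mono sum_nonneg partial_sum_le) auto
  finally show ?thesis
    unfolding H_def T_def by (simp add: powr_minus_divide)
qed

end

section \<open>Monotone multi-indices and their level profiles\<close>

text \<open>For a multi-index \<open>k\<close> that is monotone on the index set \<open>J\<close>, the sets
  \<open>below k J m = {l \<in> J. k l < m}\<close> are initial segments of \<open>J\<close>; hence they are determined by
  their cardinalities.  Recording these cardinalities for \<open>m = 2..M\<close> (the level profile)
  together with the entries that are not \<open>\<le> M\<close> on \<open>J\<close> (the truncation) determines \<open>k\<close>.\<close>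

definition below :: "(nat \<Rightarrow> nat) \<Rightarrow> nat set \<Rightarrow> nat \<Rightarrow> nat set" where
  "below k J m = {l \<in> J. k l < m}"

definition level_profile :: "(nat \<Rightarrow> nat) \<Rightarrow> nat set \<Rightarrow> nat \<Rightarrow> nat \<Rightarrow> nat" where
  "level_profile k J M = restrict (\<lambda>m. card (below k J m)) {2..M}"

definition truncation :: "(nat \<Rightarrow> nat) \<Rightarrow> nat set \<Rightarrow> nat \<Rightarrow> nat \<Rightarrow> nat" where
  "truncation k J M = (\<lambda>l. if l \<in> J \<and> k l \<le> M then 0 else k l)"

lemma nabla_sym_memD:
  assumes "k \<in> nabla_sym (\<lambda>_. J) d"
  shows "\<And>l. l \<in> {1..d} \<Longrightarrow> 1 \<le> k l" and "\<And>l. l \<notin> {1..d} \<Longrightarrow> k l = 0" and "mono_on J k"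
  using assms unfolding nabla_sym_def by (auto intro: mono_onI)

lemma below_eq_if_card_eq:
  assumes "finite J" "mono_on J k" "mono_on J k'" "card (below k J m) = card (below k' J m)"
  shows "below k J m = below k' J m"
proof (rule downsets_eq_if_card_eq[OF assms(1) _ _ _ _ assms(4)])
  show "x \<in> below k J m \<Longrightarrow> y \<in> J \<Longrightarrow> y \<le> x \<Longrightarrow> y \<in> below k J m" for x y
    using mono_onD[OF assms(2), of y x] unfolding below_def by auto
  show "x \<in> below k' J m \<Longrightarrow> y \<in> J \<Longrightarrow> y \<le> x \<Longrightarrow> y \<in> below k' J m" for x y
    using mono_onD[OF assms(3), of y x] unfolding below_def by auto
qed (auto simp: below_def)

text \<open>Two monotone multi-indices with the same level profile agree wherever both are \<open>\<le> M\<close>: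
  if \<open>k l < k' l \<le> M\<close>, then \<open>l\<close> lies in \<open>below k J (k' l)\<close> but not in \<open>below k' J (k' l)\<close>.\<close>

lemma same_profile_small_entries_eq:
  assumes J: "finite J" and mono: "mono_on J k" "mono_on J k'"
    and pos: "\<And>l. l \<in> J \<Longrightarrow> 1 \<le> k l" "\<And>l. l \<in> J \<Longrightarrow> 1 \<le> k' l"
    and prof: "level_profile k J M = level_profile k' J M"
    and l: "l \<in> J" "k l \<le> M" "k' l \<le> M"
  shows "k l = k' l"
proof -
  have no_strict: False if "k1 l < k2 l" "k2 l \<le> M" "mono_on J k1" "mono_on J k2"
    "\<And>l. l \<in> J \<Longrightarrow> 1 \<le> k1 l" "level_profile k1 J M = level_profile k2 J M" for k1 k2
  proof -
    have m: "k2 l \<in> {2..M}" using that(1,2,5) l(1) by fastforce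
    then have "card (below k1 J (k2 l)) = card (below k2 J (k2 l))"
      using fun_cong[OF that(6), of "k2 l"] unfolding level_profile_def by simp
    then have "below k1 J (k2 l) = below k2 J (k2 l)"
      by (rule below_eq_if_card_eq[OF J that(3,4)])
    moreover have "l \<in> below k1 J (k2 l)" "l \<notin> below k2 J (k2 l)"
      using that(1) l(1) unfolding below_def by auto
    ultimately show False by blast
  qed
  show ?thesis
    using no_strict[of k k'] no_strict[of k' k] mono pos prof l by fastforce
qed

lemma profile_truncation_inj:
  assumes J: "finite J"
    and A: "\<And>k. k \<in> A \<Longrightarrow> mono_on J k \<and> (\<forall>l\<in>J. 1 \<le> k l)"
  shows "inj_on (\<lambda>k. (level_profile k J M, truncation k J M)) A"
proof (rule inj_onI)
  fix k k' assume k: "k \<in> A" "k' \<in> A"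
    and eq: "(level_profile k J M, truncation k J M) = (level_profile k' J M, truncation k' J M)"
  show "k = k'"
  proof
    fix l
    have tr: "truncation k J M l = truncation k' J M l" using eq by simp
    show "k l = k' l"
    proof (cases "l \<in> J \<and> k l \<le> M \<and> k' l \<le> M")
      case True
      then show ?thesis
        using same_profile_small_entries_eq[OF J] A[OF k(1)] A[OF k(2)] eq by auto
    next
      case False
      then show ?thesis
        using tr A[OF k(1)] A[OF k(2)] unfolding truncation_def by (auto split: if_splits)
    qed
  qed
qed

lemma level_profile_mem:
  assumes "finite J"
  shows "level_profile k J M \<in> PiE {2..M} (\<lambda>_. {0..card J})"
  using card_mono[OF assms, of "below k J _"] unfolding level_profile_def below_def by auto

text \<open>The coordinates in \<open>J\<close> where \<open>k\<close> exceeds \<open>M\<close>.  They form a final segment of \<open>J\<close>, so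
  their number determines the set.\<close>

definition large :: "(nat \<Rightarrow> nat) \<Rightarrow> nat set \<Rightarrow> nat \<Rightarrow> nat set" where
  "large k J M = {l \<in> J. M < k l}"

lemma large_eq_if_card_eq:
  assumes J: "finite J" and mono: "mono_on J k" "mono_on J k'"
    and card_eq: "card (large k J M) = card (large k' J M)"
  shows "large k J M = large k' J M"
proof -
  have large_eq: "large k J M = J - below k J (Suc M)" for k
    unfolding large_def below_def by auto
  have card_large: "card (large k J M) = card J - card (below k J (Suc M))" for k
    unfolding large_eq using J by (intro card_Diff_subset) (auto simp: below_def)
  have "card (below k J (Suc M)) \<le> card J" "card (below k' J (Suc M)) \<le> card J"
    using J by (auto intro!: card_mono simp: below_def)
  then have "card (below k J (Suc M)) = card (below k' J (Suc M))"
    using card_eq card_large by simp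
  then have "below k J (Suc M) = below k' J (Suc M)"
    by (rule below_eq_if_card_eq[OF J mono])
  then show ?thesis unfolding large_eq by simp
qed

section \<open>Upper bound for the number of large normalized eigenvalues\<close>

definition sym_superlevel :: "(nat \<Rightarrow> real) \<Rightarrow> nat set \<Rightarrow> nat \<Rightarrow> real \<Rightarrow> (nat \<Rightarrow> nat) set" where
  "sym_superlevel mu J d eps = {k \<in> nabla_sym (\<lambda>_. J) d. (\<Prod>l\<in>{1..d}. mu (k l)) > eps}"

context
  fixes mu :: "nat \<Rightarrow> real" and J :: "nat set" and d M :: nat and \<rho> eps :: real
  assumes J: "J \<subseteq> {1..d}"
    and mu01: "\<And>m. m \<ge> 1 \<Longrightarrow> 0 \<le> mu m \<and> mu m \<le> 1"
    and rho: "\<And>m. M < m \<Longrightarrow> mu m \<le> \<rho>"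
begin

lemma sym_superlevel_memD:
  assumes "k \<in> sym_superlevel mu J d eps"
  shows "\<And>l. l \<in> {1..d} \<Longrightarrow> 1 \<le> k l" "\<And>l. l \<notin> {1..d} \<Longrightarrow> k l = 0" "mono_on J k"
    and "(\<Prod>l\<in>{1..d}. mu (k l)) > eps"
  using assms nabla_sym_memD[of k J d] unfolding sym_superlevel_def by auto

text \<open>Each coordinate exceeding \<open>M\<close> contributes a factor \<open>\<le> \<rho>\<close> to the product.\<close>

lemma large_card_bound:
  assumes k: "k \<in> sym_superlevel mu J d eps"
  shows "eps < \<rho> ^ card (large k J M)"
proof -
  note k_props = sym_superlevel_memD[OF k]
  have "eps < (\<Prod>l\<in>{1..d}. mu (k l))" using k_props(4) .
  also have "\<dots> \<le> (\<Prod>l\<in>large k J M. mu (k l))"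
    using J k_props(1) mu01 by (intro prod_le_prod_subset) (auto simp: large_def)
  also have "\<dots> \<le> (\<Prod>l\<in>large k J M. \<rho>)"
  proof (rule prod_mono)
    fix l assume "l \<in> large k J M"
    then show "0 \<le> mu (k l) \<and> mu (k l) \<le> \<rho>"
      using J k_props(1) mu01 rho unfolding large_def by force
  qed
  finally show ?thesis by simp
qed

text \<open>All multi-indices with exactly \<open>j\<close> large coordinates have the same large set; their
  truncations are supported on a fixed set of \<open>d - |J| + j\<close> coordinates and therefore form a
  subset of a superlevel set of that dimension.\<close>

lemma truncation_fibre_bound:
  fixes j :: nat
  assumes lim: "mu \<longlonglongrightarrow> 0" and tau: "\<tau> > 0" and summ: "summable (\<lambda>m. mu (Suc m) powr \<tau>)"
    and eps: "eps > 0"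
  defines "F \<equiv> (\<lambda>k. truncation k J M) ` {k \<in> sym_superlevel mu J d eps. card (large k J M) = j}"
  shows "finite F"
    and "real (card F) \<le> eps powr (-\<tau>) * (\<Sum>m. mu (Suc m) powr \<tau>) ^ (d - card J + j)"
proof -
  define S where "S = (\<Sum>m. mu (Suc m) powr \<tau>)"
  have finJ: "finite J" using J finite_subset by blast
  have "finite F \<and> real (card F) \<le> eps powr (-\<tau>) * S ^ (d - card J + j)"
  proof (cases "F = {}")
    case True
    have "S \<ge> 0" unfolding S_def using summ by (intro suminf_nonneg) auto
    then show ?thesis using True by simp
  next
    case False
    then obtain k0 where k0: "k0 \<in> sym_superlevel mu J d eps" "card (large k0 J M) = j"
      unfolding F_def by auto
    define D where "D = ({1..d} - J) \<union> large k0 J M"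
    have finD: "finite D" unfolding D_def large_def using finJ by auto
    have card_D: "card D = d - card J + j"
    proof -
      have "card ({1..d} - J) = d - card J" using J finJ by (simp add: card_Diff_subset)
      moreover have "({1..d} - J) \<inter> large k0 J M = {}" by (auto simp: large_def)
      moreover have "finite (large k0 J M)" using finJ by (simp add: large_def)
      ultimately show ?thesis unfolding D_def using k0(2) by (simp add: card_Un_disjoint)
    qed
    have "F \<subseteq> superlevel mu D eps"
    proof
      fix h assume "h \<in> F"
      then obtain k where k: "k \<in> sym_superlevel mu J d eps" "card (large k J M) = j"
        and h: "h = truncation k J M"
        unfolding F_def by auto
      note k_props = sym_superlevel_memD[OF k(1)]
      have "large k J M = large k0 J M"
        using k(2) k0 by (intro large_eq_if_card_eq[OF finJ k_props(3) sym_superlevel_memD(3)[OF k0(1)]]) simp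
      then have D_eq: "D = ({1..d} - J) \<union> large k J M" unfolding D_def by simp
      have h_on_D: "h l = k l" if "l \<in> D" for l
        using that unfolding D_eq h truncation_def large_def by auto
      have h_off_D: "h l = 0" if "l \<notin> D" for l
        using that k_props(2) unfolding D_eq h truncation_def large_def by auto
      have "eps < (\<Prod>l\<in>{1..d}. mu (k l))" using k_props(4) .
      also have "\<dots> \<le> (\<Prod>l\<in>D. mu (k l))"
        using J k_props(1) mu01 unfolding D_eq by (intro prod_le_prod_subset) (auto simp: large_def)
      also have "\<dots> = (\<Prod>l\<in>D. mu (h l))" using h_on_D by simp
      finally show "h \<in> superlevel mu D eps"
        unfolding superlevel_def using h_on_D h_off_D k_props(1) J
        by (auto simp: D_eq large_def)
    qed
    then show ?thesis
      using superlevel_finite[OF finD mu01 lim eps] superlevel_card_bound[OF finD mu01 lim eps tau summ] card_D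
        card_mono[of "superlevel mu D eps" F] unfolding S_def
      by (smt (verit) finite_subset of_nat_le_iff)
  qed
  then show "finite F" "real (card F) \<le> eps powr (-\<tau>) * S ^ (d - card J + j)" by auto
qed

text \<open>The main counting estimate: injectivity of (level profile, truncation), at most
  \<open>(|J|+1)^(M-1)\<close> profiles, and the fibre bound for each admissible number \<open>j\<close> of large
  coordinates (admissible meaning \<open>\<rho>^j > eps\<close>).\<close>

lemma sym_superlevel_card_bound:
  assumes lim: "mu \<longlonglongrightarrow> 0" and tau: "\<tau> > 0" and summ: "summable (\<lambda>m. mu (Suc m) powr \<tau>)"
    and eps: "eps > 0"
  shows "real (card (sym_superlevel mu J d eps))
     \<le> real ((card J + 1) ^ (M - 1)) *
        (\<Sum>j\<in>{j\<in>{..card J}. \<rho> ^ j > eps}. eps powr (-\<tau>) * (\<Sum>m. mu (Suc m) powr \<tau>) ^ (d - card J + j))"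
proof -
  define A where "A = sym_superlevel mu J d eps"
  define S where "S = (\<Sum>m. mu (Suc m) powr \<tau>)"
  define Js where "Js = {j\<in>{..card J}. \<rho> ^ j > eps}"
  define F where "F j = (\<lambda>k. truncation k J M) ` {k \<in> A. card (large k J M) = j}" for j
  define Pr where "Pr = PiE {2..M} (\<lambda>_. {0..card J})"
  have finJ: "finite J" using J finite_subset by blast
  have F_bound: "finite (F j)" "real (card (F j)) \<le> eps powr (-\<tau>) * S ^ (d - card J + j)" for j
    using truncation_fibre_bound[OF lim tau summ eps] unfolding F_def A_def S_def by blast+
  have large_in_Js: "card (large k J M) \<in> Js" if "k \<in> A" for k
    using large_card_bound[of k] that finJ unfolding A_def Js_def
    by (auto intro!: card_mono simp: large_def)
  have trunc_sub: "(\<lambda>k. truncation k J M) ` A \<subseteq> (\<Union>j\<in>Js. F j)"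
    using large_in_Js unfolding F_def by blast
  have finJs: "finite Js" unfolding Js_def by auto
  have fin_trunc: "finite ((\<lambda>k. truncation k J M) ` A)"
    using trunc_sub finJs F_bound(1) by (meson finite_UN_I finite_subset)
  have "real (card ((\<lambda>k. truncation k J M) ` A)) \<le> real (\<Sum>j\<in>Js. card (F j))"
    using card_mono[OF _ trunc_sub] card_UN_le[OF finJs, of F] finJs F_bound(1)
    by (metis (no_types, lifting) finite_UN_I le_trans of_nat_le_iff)
  also have "\<dots> \<le> (\<Sum>j\<in>Js. eps powr (-\<tau>) * S ^ (d - card J + j))"
    unfolding of_nat_sum using F_bound(2) by (intro sum_mono) auto
  finally have card_trunc: "real (card ((\<lambda>k. truncation k J M) ` A))
      \<le> (\<Sum>j\<in>Js. eps powr (-\<tau>) * S ^ (d - card J + j))" .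
  have inj: "inj_on (\<lambda>k. (level_profile k J M, truncation k J M)) A"
    using sym_superlevel_memD J unfolding A_def by (intro profile_truncation_inj[OF finJ]) blast
  have "card A \<le> card (Pr \<times> (\<lambda>k. truncation k J M) ` A)"
    using level_profile_mem[OF finJ] fin_trunc unfolding Pr_def
    by (intro card_inj_on_le[OF inj]) (auto intro: finite_PiE)
  also have "\<dots> = (card J + 1) ^ (M - 1) * card ((\<lambda>k. truncation k J M) ` A)"
    unfolding Pr_def by (simp add: card_cartesian_product card_PiE)
  finally have "real (card A) \<le> real ((card J + 1) ^ (M - 1)) * real (card ((\<lambda>k. truncation k J M) ` A))"
    by (metis of_nat_le_iff of_nat_mult)
  also have "\<dots> \<le> real ((card J + 1) ^ (M - 1)) * (\<Sum>j\<in>Js. eps powr (-\<tau>) * S ^ (d - card J + j))"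
    by (intro mult_left_mono card_trunc) simp
  finally show ?thesis unfolding A_def S_def Js_def .
qed

end

lemma admissible_index_bound:
  fixes \<rho> eps :: real
  assumes rho: "0 < \<rho>" "\<rho> < 1" and eps: "0 < eps" and j: "eps < \<rho> ^ j"
  shows "real j < ln (1/eps) / ln (1/\<rho>)"
proof -
  have "ln eps < ln (\<rho> ^ j)" using eps j by simp
  also have "ln (\<rho> ^ j) = real j * ln \<rho>" using rho by (simp add: ln_realpow)
  finally have "real j * ln (1/\<rho>) < ln (1/eps)" using rho eps by (simp add: ln_div)
  then show ?thesis using rho by (simp add: field_simps)
qed

lemma card_admissible_le:
  fixes \<rho> eps :: real
  assumes rho: "0 < \<rho>" "\<rho> < 1" and eps: "0 < eps" "eps \<le> 1"
  shows "real (card {j\<in>{..a::nat}. \<rho> ^ j > eps}) \<le> (1 + 1 / ln (1/\<rho>)) * eps powr (-1)"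
proof -
  define t where "t = ln (1/eps) / ln (1/\<rho>)"
  have lr: "ln (1/\<rho>) > 0" using rho by simp
  have "{j\<in>{..a}. \<rho> ^ j > eps} \<subseteq> {..<nat \<lceil>t\<rceil>}"
  proof
    fix j assume "j \<in> {j\<in>{..a}. \<rho> ^ j > eps}"
    then have "real_of_int (int j) < t" using admissible_index_bound[OF rho eps(1)] unfolding t_def by simp
    then show "j \<in> {..<nat \<lceil>t\<rceil>}" by (simp add: less_ceiling_iff zless_nat_eq_int_zless)
  qed
  then have "real (card {j\<in>{..a}. \<rho> ^ j > eps}) \<le> real (nat \<lceil>t\<rceil>)"
    using card_mono[OF finite_lessThan] by fastforce
  also have "\<dots> = real_of_int \<lceil>t\<rceil>" using eps lr unfolding t_def by simp
  also have "\<dots> \<le> t + 1" by (rule of_int_ceiling_le_add_one)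
  also have "t \<le> (1/eps) / ln (1/\<rho>)"
    unfolding t_def using ln_le_minus_one[of "1/eps"] eps lr by (intro divide_right_mono) auto
  also have "(1/eps) / ln (1/\<rho>) + 1 \<le> (1 + 1 / ln (1/\<rho>)) * eps powr (-1)"
    using eps by (simp add: powr_minus_divide field_simps)
  finally show ?thesis by simp
qed

text \<open>The sum appearing in \<open>sym_superlevel_card_bound\<close> is polynomial in \<open>1/eps\<close>, with the
  exponent growing by \<open>ln S / ln(1/\<rho>)\<close> to absorb the factors \<open>S^j\<close>.\<close>

lemma admissible_sum_bound:
  fixes \<rho> S eps \<tau> :: real
  assumes rho: "0 < \<rho>" "\<rho> < 1" and S: "S \<ge> 1" and eps: "0 < eps" "eps \<le> 1"
  shows "(\<Sum>j\<in>{j\<in>{..a::nat}. \<rho> ^ j > eps}. eps powr (-\<tau>) * S ^ (b + j))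
     \<le> (1 + 1 / ln (1/\<rho>)) * S ^ b * eps powr (-(\<tau> + ln S / ln (1/\<rho>) + 1))"
proof -
  define Js where "Js = {j\<in>{..a}. \<rho> ^ j > eps}"
  define c where "c = ln S / ln (1/\<rho>)"
  have lr: "ln (1/\<rho>) > 0" using rho by simp
  have S_pow: "S ^ j \<le> eps powr (-c)" if "j \<in> Js" for j
  proof -
    have j: "real j \<le> ln (1/eps) / ln (1/\<rho>)"
      using admissible_index_bound[OF rho eps(1), of j] that unfolding Js_def by simp
    have "S ^ j = exp (real j * ln S)" using S by (simp add: exp_of_nat_mult)
    also have "\<dots> \<le> exp (ln (1/eps) / ln (1/\<rho>) * ln S)"
      using j S by (intro exp_le_cancel_iff[THEN iffD2] mult_right_mono) auto
    also have "\<dots> = eps powr (-c)"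
      using eps unfolding c_def by (simp add: powr_def ln_div)
    finally show ?thesis .
  qed
  have "(\<Sum>j\<in>Js. eps powr (-\<tau>) * S ^ (b + j)) \<le> (\<Sum>j\<in>Js. eps powr (-\<tau>) * S ^ b * eps powr (-c))"
    using S_pow S by (intro sum_mono) (auto simp: power_add mult.assoc intro!: mult_left_mono)
  also have "\<dots> = real (card Js) * (eps powr (-\<tau>) * S ^ b * eps powr (-c))" by simp
  also have "\<dots> \<le> ((1 + 1 / ln (1/\<rho>)) * eps powr (-1)) * (eps powr (-\<tau>) * S ^ b * eps powr (-c))"
    using card_admissible_le[OF rho eps] S unfolding Js_def by (intro mult_right_mono) auto
  also have "\<dots> = (1 + 1 / ln (1/\<rho>)) * S ^ b * (eps powr (-1) * eps powr (-\<tau>) * eps powr (-c))"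
    by (simp only: mult_ac)
  also have "eps powr (-1) * eps powr (-\<tau>) * eps powr (-c) = eps powr (-(\<tau> + c + 1))"
    unfolding powr_add[symmetric] by (simp add: algebra_simps)
  finally show ?thesis unfolding Js_def c_def .
qed

text \<open>If all binomial coefficients \<open>b choose s\<close> are bounded by \<open>K * A^s\<close> with \<open>A \<ge> 1\<close>, then \<open>b\<close> is
  at most logarithmic in \<open>K\<close>: take \<open>s \<approx> b/(2A)\<close> and use \<open>(b/s)^s \<le> b choose s\<close> to obtain
  \<open>2^s \<le> K\<close>.\<close>

lemma binomial_growth_bound:
  fixes A K :: real and b :: nat
  assumes A: "A \<ge> 1" and bound: "\<And>s. s \<le> b \<Longrightarrow> real (b choose s) \<le> K * A ^ s"
  shows "real b < 2 * A * (1 + ln K / ln 2)"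
proof -
  have K: "K \<ge> 1" using bound[of 0] by simp
  define s where "s = nat \<lfloor>real b / (2 * A)\<rfloor>"
  have "real b / (2 * A) \<ge> 0" using A by simp
  then have s_le: "real s \<le> real b / (2 * A)" and b_lt: "real b / (2 * A) < real s + 1"
    unfolding s_def by linarith+
  have s_log: "real s \<le> ln K / ln 2"
  proof (cases "s = 0")
    case True
    then show ?thesis using K by simp
  next
    case False
    have "real b * 1 \<le> real b * (2 * A)" using A by (intro mult_left_mono) auto
    then have "real b / (2 * A) \<le> real b" using A by (simp add: divide_le_eq)
    then have sb: "s \<le> b" using s_le by linarith
    have "2 * A \<le> real b / real s" using s_le False A by (simp add: field_simps)
    then have "(2 * A) ^ s \<le> (real b / real s) ^ s" using A by (intro power_mono) auto
    also have "\<dots> \<le> real (b choose s)" using sb by (rule binomial_ge_n_over_k_pow_k)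
    also have "\<dots> \<le> K * A ^ s" using bound[OF sb] .
    finally have "2 ^ s \<le> K" using A by (simp add: power_mult_distrib)
    then have "ln (2 ^ s) \<le> ln K" using K by (subst ln_le_cancel_iff) auto
    then show ?thesis by (simp add: ln_realpow field_simps)
  qed
  have "real b < 2 * A * (real s + 1)" using b_lt A by (simp add: field_simps)
  also have "\<dots> \<le> 2 * A * (1 + ln K / ln 2)" using s_log A by simp
  finally show ?thesis .
qed

lemma sqrt_powr:
  fixes x a :: real
  shows "0 \<le> x \<Longrightarrow> sqrt x powr a = x powr (a / 2)"
  by (simp add: powr_half_sqrt[symmetric] powr_powr)

lemma bigo_ln_if_affine_ln_bound:
  fixes f :: "nat \<Rightarrow> real"
  assumes f: "\<And>d. d \<ge> 1 \<Longrightarrow> 0 \<le> f d \<and> f d \<le> K1 + K2 * ln (real d)" and K2: "K2 \<ge> 0"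
  shows "f \<in> O(\<lambda>d. ln (real d))"
proof (rule landau_o.bigI[where c = "\<bar>K1\<bar> + K2 + 1"])
  show "\<bar>K1\<bar> + K2 + 1 > 0" using K2 by simp
  show "eventually (\<lambda>d. norm (f d) \<le> (\<bar>K1\<bar> + K2 + 1) * norm (ln (real d))) at_top"
    using eventually_ge_at_top[of "3::nat"]
  proof eventually_elim
    case (elim d)
    have "exp 1 \<le> real d" using exp_le elim by linarith
    then have ln_ge_1: "ln (real d) \<ge> 1" using elim by (simp add: ln_ge_iff)
    have "f d \<le> K1 + K2 * ln (real d)" using f elim by simp
    also have "\<dots> \<le> (\<bar>K1\<bar> + K2 + 1) * ln (real d)"
      using ln_ge_1 by (simp add: distrib_right) (smt (verit) mult_le_cancel_left1)
    finally show ?case using f[of d] elim ln_ge_1 by simp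
  qed
qed

lemma bounded_if_bigo_1:
  fixes b :: "nat \<Rightarrow> nat"
  assumes "(\<lambda>d. real (b d)) \<in> O(\<lambda>_. 1)"
  obtains B where "\<And>d. b d \<le> B"
proof -
  obtain c where "eventually (\<lambda>d. norm (real (b d)) \<le> c * norm (1::real)) at_top"
    using landau_o.bigE[OF assms] by blast
  then obtain N where N: "\<And>d. d \<ge> N \<Longrightarrow> real (b d) \<le> c"
    by (auto simp: eventually_at_top_linorder)
  have "b d \<le> nat \<lceil>c\<rceil> + (\<Sum>d'<N. b d')" for d
  proof (cases "d \<ge> N")
    case True
    then show ?thesis using N[OF True] by linarith
  next
    case False
    then show ?thesis using member_le_sum[of d "{..<N}" b] by (simp add: trans_le_add2)
  qed
  then show ?thesis using that by blast
qed

text \<open>If \<open>b(d) \<in> O(ln d)\<close>, then \<open>S^b(d)\<close> grows at most polynomially in \<open>d\<close>, since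
  \<open>S^(c ln d) = d^(c ln S)\<close>.\<close>

lemma pow_le_poly_if_bigo_ln:
  fixes b :: "nat \<Rightarrow> nat" and S :: real
  assumes "(\<lambda>d. real (b d)) \<in> O(\<lambda>d. ln (real d))" and S: "S \<ge> 1"
  obtains C q where "C \<ge> 1" "q \<ge> 0" "\<And>d. d \<ge> 1 \<Longrightarrow> S ^ b d \<le> C * real d powr q"
proof -
  obtain c where c: "c > 0"
    and "eventually (\<lambda>d. norm (real (b d)) \<le> c * norm (ln (real d))) at_top"
    using landau_o.bigE[OF assms(1)] by blast
  then obtain N where N: "\<And>d. d \<ge> N \<Longrightarrow> real (b d) \<le> c * \<bar>ln (real d)\<bar>"
    by (auto simp: eventually_at_top_linorder)
  define C where "C = S ^ (\<Sum>d<N. b d)"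
  define q where "q = c * ln S"
  have C: "C \<ge> 1" unfolding C_def using S by simp
  have q: "q \<ge> 0" unfolding q_def using c S by simp
  have "S ^ b d \<le> C * real d powr q" if d: "d \<ge> 1" for d
  proof (cases "d \<ge> N")
    case True
    have "S ^ b d = S powr real (b d)" using S by (simp add: powr_realpow)
    also have "\<dots> \<le> S powr (c * ln (real d))" using N[OF True] d S by (intro powr_mono) auto
    also have "\<dots> = real d powr q" using S d unfolding q_def by (simp add: powr_def mult_ac)
    also have "\<dots> \<le> C * real d powr q" using mult_right_mono[OF C, of "real d powr q"] by simp
    finally show ?thesis .
  next
    case False
    then have "b d \<le> (\<Sum>d<N. b d)" using member_le_sum[of d "{..<N}" b] by simp
    then have "S ^ b d \<le> C" unfolding C_def using S by (intro power_increasing) auto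
    also have "\<dots> \<le> C * real d powr q" using C d q by (simp add: ge_one_powr_ge_zero)
    finally show ?thesis .
  qed
  then show ?thesis using that C q by blast
qed

text \<open>Under
  the normalized error criterion only the ratios \<open>mu m = lam m / lam 1\<close> matter.\<close>

locale sym_tensor_problem =
  fixes lam :: "nat \<Rightarrow> real" and I :: "nat \<Rightarrow> nat set"
  assumes nonneg: "\<And>m. m \<ge> 1 \<Longrightarrow> lam m \<ge> 0"
    and noninc: "\<And>m. m \<ge> 1 \<Longrightarrow> lam (Suc m) \<le> lam m"
    and to_zero: "lam \<longlonglongrightarrow> 0"
    and lam2_pos: "lam 2 > 0"
    and I_sub: "\<And>d. d \<ge> 1 \<Longrightarrow> I d \<subseteq> {1..d}"
begin

definition mu :: "nat \<Rightarrow> real" where "mu m = lam m / lam 1"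

lemma lam_antimono:
  assumes "1 \<le> m" "m \<le> n"
  shows "lam n \<le> lam m"
  using assms(2)
proof (induction n rule: dec_induct)
  case (step n)
  then show ?case using noninc[of n] assms(1) by linarith
qed simp

lemma lam1_pos: "lam 1 > 0"
  using lam_antimono[of 1 2] lam2_pos by simp

lemma mu01: "m \<ge> 1 \<Longrightarrow> 0 \<le> mu m \<and> mu m \<le> 1"
  using lam_antimono[of 1 m] nonneg[of m] lam1_pos unfolding mu_def by auto

lemma mu_1: "mu 1 = 1"
  using lam1_pos unfolding mu_def by simp

lemma mu_antimono: "1 \<le> m \<Longrightarrow> m \<le> n \<Longrightarrow> mu n \<le> mu m"
  using lam_antimono lam1_pos unfolding mu_def by (simp add: divide_right_mono)

lemma mu_lim: "mu \<longlonglongrightarrow> 0"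
  unfolding mu_def using tendsto_divide_zero[OF to_zero, of "lam 1"] by simp

lemma mu2_pos: "mu 2 > 0"
  using lam2_pos lam1_pos unfolding mu_def by simp

lemma summable_lam_iff_mu:
  "summable (\<lambda>m. lam (Suc m) powr \<tau>) \<longleftrightarrow> summable (\<lambda>m. mu (Suc m) powr \<tau>)"
proof -
  have "lam (Suc m) = lam 1 * mu (Suc m)" for m
    using lam1_pos unfolding mu_def by simp
  then have "(\<lambda>m. lam (Suc m) powr \<tau>) = (\<lambda>m. lam 1 powr \<tau> * mu (Suc m) powr \<tau>)"
    by (simp only: powr_mult)
  moreover have "lam 1 powr \<tau> \<noteq> 0" using lam1_pos by simp
  ultimately show ?thesis by (simp add: summable_cmult_iff)
qed

lemma mu_powr_sum_ge_1:
  assumes "summable (\<lambda>m. mu (Suc m) powr \<tau>)"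
  shows "(\<Sum>m. mu (Suc m) powr \<tau>) \<ge> 1"
  using sum_le_suminf[OF assms, of "{0}"] mu_1 by simp

text \<open>The largest eigenvalue \<open>lam 1 ^ d\<close> belongs to the constant multi-index \<open>(1,\<dots>,1)\<close>.\<close>

lemma eps_init_eq:
  assumes d: "d \<ge> 1"
  shows "eps_init lam I d = sqrt (lam 1 ^ d)"
proof -
  define one where "one = (\<lambda>l. if l \<in> {1..d} then 1 else 0 :: nat)"
  have "Sup (lam_dk lam d ` nabla_sym I d) = lam 1 ^ d"
  proof (rule cSup_eq_maximum)
    have "one \<in> nabla_sym I d" using I_sub[OF d] unfolding one_def nabla_sym_def by auto
    moreover have "lam_dk lam d one = lam 1 ^ d" unfolding one_def lam_dk_def by simp
    ultimately show "lam 1 ^ d \<in> lam_dk lam d ` nabla_sym I d" by (metis image_eqI)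
  next
    fix x assume "x \<in> lam_dk lam d ` nabla_sym I d"
    then obtain k where k: "k \<in> nabla_sym I d" "x = lam_dk lam d k" by blast
    have "lam_dk lam d k \<le> (\<Prod>l\<in>{1..d}. lam 1)" unfolding lam_dk_def
    proof (rule prod_mono)
      fix l assume "l \<in> {1..d}"
      then have "1 \<le> k l" using k(1) unfolding nabla_sym_def by auto
      then show "0 \<le> lam (k l) \<and> lam (k l) \<le> lam 1" using nonneg lam_antimono by auto
    qed
    then show "x \<le> lam 1 ^ d" using k(2) by simp
  qed
  then show ?thesis unfolding eps_init_def by simp
qed

lemma info_compl_normalized:
  assumes d: "d \<ge> 1" and e: "e > 0"
  shows "info_compl lam I (e * eps_init lam I d) d = card (sym_superlevel mu (I d) d (e\<^sup>2))"
proof -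
  have L: "lam 1 ^ d > 0" using lam1_pos by simp
  have "lam_dk lam d k > (e * eps_init lam I d)\<^sup>2 \<longleftrightarrow> (\<Prod>l\<in>{1..d}. mu (k l)) > e\<^sup>2" for k
  proof -
    have "(\<Prod>l\<in>{1..d}. mu (k l)) = lam_dk lam d k / lam 1 ^ d"
      unfolding mu_def lam_dk_def by (simp add: prod_dividef)
    moreover have "(e * eps_init lam I d)\<^sup>2 = e\<^sup>2 * lam 1 ^ d"
      using eps_init_eq[OF d] L by (simp add: power_mult_distrib)
    ultimately show ?thesis using L by (simp add: pos_less_divide_eq)
  qed
  moreover have "nabla_sym I d = nabla_sym (\<lambda>_. I d) d" unfolding nabla_sym_def by simp
  ultimately show ?thesis unfolding info_compl_def sym_superlevel_def by simp
qed

lemma info_compl_ge: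
  assumes d: "d \<ge> 1" and e: "e > 0" and X: "finite X" "inj_on f X"
    and f: "\<And>x. x \<in> X \<Longrightarrow> f x \<in> sym_superlevel mu (I d) d (e\<^sup>2)"
  shows "card X \<le> info_compl lam I (e * eps_init lam I d) d"
proof -
  have "sym_superlevel mu (I d) d (e\<^sup>2) \<subseteq> superlevel mu {1..d} (e\<^sup>2)"
    unfolding sym_superlevel_def superlevel_def nabla_sym_def by auto
  then have "finite (sym_superlevel mu (I d) d (e\<^sup>2))"
    using superlevel_finite[OF _ mu01 mu_lim, of "{1..d}" "e\<^sup>2"] e finite_subset by auto
  then have "card (f ` X) \<le> card (sym_superlevel mu (I d) d (e\<^sup>2))"
    using f by (intro card_mono) auto
  then show ?thesis using card_image[OF X(2)] info_compl_normalized[OF d e] by simp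
qed

lemma info_compl_upper:
  assumes tau: "\<tau> > 0" and summ: "summable (\<lambda>m. mu (Suc m) powr \<tau>)"
    and rho: "0 < \<rho>" "\<rho> < 1" "\<And>m. M < m \<Longrightarrow> mu m \<le> \<rho>"
  obtains C p where "C > 0" "p > 0"
    "\<And>d e. d \<ge> 1 \<Longrightarrow> e \<in> {0<..1} \<Longrightarrow> real (info_compl lam I (e * eps_init lam I d) d)
       \<le> real ((card (I d) + 1) ^ (M - 1)) * C * (\<Sum>m. mu (Suc m) powr \<tau>) ^ (d - card (I d)) * e powr (-p)"
proof -
  define S where "S = (\<Sum>m. mu (Suc m) powr \<tau>)"
  define C where "C = 1 + 1 / ln (1/\<rho>)"
  define c where "c = ln S / ln (1/\<rho>)"
  have S: "S \<ge> 1" unfolding S_def by (rule mu_powr_sum_ge_1[OF summ])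
  have lr: "ln (1/\<rho>) > 0" using rho by simp
  have C: "C > 0" unfolding C_def using lr by (simp add: add_pos_nonneg)
  have c: "c \<ge> 0" unfolding c_def using lr S by simp
  have main: "real (info_compl lam I (e * eps_init lam I d) d)
      \<le> real ((card (I d) + 1) ^ (M - 1)) * C * S ^ (d - card (I d)) * e powr (- (2 * (\<tau> + c + 1)))"
    if d: "1 \<le> d" and e: "e \<in> {0<..1}" for d e
  proof -
    have e2: "0 < e\<^sup>2" "e\<^sup>2 \<le> 1" using e by (auto simp: power_le_one)
    have "real (info_compl lam I (e * eps_init lam I d) d) = real (card (sym_superlevel mu (I d) d (e\<^sup>2)))"
      using info_compl_normalized[OF d] e by simp
    also have "\<dots> \<le> real ((card (I d) + 1) ^ (M - 1)) *
        (\<Sum>j\<in>{j\<in>{..card (I d)}. \<rho> ^ j > e\<^sup>2}. (e\<^sup>2) powr (-\<tau>) * S ^ (d - card (I d) + j))"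
      unfolding S_def by (rule sym_superlevel_card_bound[OF I_sub[OF d] mu01 rho(3) mu_lim tau summ e2(1)])
    also have "\<dots> \<le> real ((card (I d) + 1) ^ (M - 1)) * (C * S ^ (d - card (I d)) * (e\<^sup>2) powr (-(\<tau> + c + 1)))"
      unfolding C_def c_def by (intro mult_left_mono admissible_sum_bound[OF rho(1,2) S e2]) simp
    also have "(e\<^sup>2) powr (-(\<tau> + c + 1)) = e powr (- (2 * (\<tau> + c + 1)))"
    proof -
      have "e\<^sup>2 = e powr (real 2)" using e by (subst powr_realpow) auto
      then show ?thesis by (simp add: powr_powr)
    qed
    finally show ?thesis by (simp add: mult.assoc)
  qed
  show ?thesis
  proof (rule that[OF C])
    show "2 * (\<tau> + c + 1) > 0" using tau c by simp
  qed (use main[unfolded S_def] in blast)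
qed

end

section \<open>Lower bounds on the information complexity\<close>

context sym_tensor_problem
begin

text \<open>In dimension 1 the indices \<open>1, \<dots>, n\<close> all have normalized eigenvalue \<open>\<ge> mu n\<close>.\<close>

lemma index_count_le_info_compl:
  assumes n: "n \<ge> 1" and mn: "mu n > 0"
  shows "n \<le> info_compl lam I (sqrt (mu n / 2) * eps_init lam I 1) 1"
proof -
  define e where "e = sqrt (mu n / 2)"
  have e: "e > 0" "e\<^sup>2 = mu n / 2" unfolding e_def using mn by auto
  define k :: "nat \<Rightarrow> nat \<Rightarrow> nat" where "k m = (\<lambda>l. if l = 1 then m else 0)" for m
  have "card {1..n} \<le> info_compl lam I (e * eps_init lam I 1) 1"
  proof (rule info_compl_ge)
    show "inj_on k {1..n}" unfolding k_def by (rule inj_onI) metis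
    fix m assume m: "m \<in> {1..n}"
    have "mu n \<le> mu m" using m by (intro mu_antimono) auto
    then show "k m \<in> sym_superlevel mu (I 1) 1 (e\<^sup>2)"
      using m I_sub[of 1] e mn unfolding sym_superlevel_def nabla_sym_def k_def by auto
  qed (use e in auto)
  then show ?thesis unfolding e_def by simp
qed

text \<open>Hence a bound \<open>n(e * eps_init, 1) \<le> C * e^(-p)\<close> forces \<open>mu(n)^p \<le> 2^p * C^2 / n^2\<close>, so
  \<open>mu\<close> is \<open>p\<close>-summable.\<close>

lemma summable_if_bounded_dim1:
  assumes p: "p > 0"
    and bnd: "\<And>e. e \<in> {0<..1} \<Longrightarrow> real (info_compl lam I (e * eps_init lam I 1) 1) \<le> C * e powr (-p)"
  shows "summable (\<lambda>m. mu (Suc m) powr p)"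
proof -
  have decay: "mu n powr p \<le> 2 powr p * C\<^sup>2 * inverse (real n ^ 2)" if n: "n \<ge> 1" for n
  proof (cases "mu n = 0")
    case False
    define x where "x = mu n / 2"
    have mn: "mu n > 0" using False mu01[OF n] by simp
    then have x: "x > 0" "x \<le> 1" unfolding x_def using mu01[OF n] by auto
    have "real n \<le> real (info_compl lam I (sqrt x * eps_init lam I 1) 1)"
      using index_count_le_info_compl[OF n mn] unfolding x_def by simp
    also have "\<dots> \<le> C * sqrt x powr (-p)" using bnd[of "sqrt x"] x by simp
    also have "sqrt x powr (-p) = x powr (-p/2)" using x by (simp add: sqrt_powr)
    finally have "real n * x powr (p/2) \<le> C * x powr (-p/2) * x powr (p/2)"
      by (rule mult_right_mono) simp
    also have "\<dots> = C" using x by (simp add: mult.assoc powr_add[symmetric])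
    finally have "x powr (p/2) \<le> C / real n" using n by (simp add: pos_le_divide_eq mult.commute)
    then have sq: "(x powr (p/2))\<^sup>2 \<le> (C / real n)\<^sup>2" by (intro power_mono) auto
    have "mu n powr p = 2 powr p * x powr p"
      unfolding x_def using mn by (subst powr_mult[symmetric]) auto
    also have "x powr p = (x powr (p/2))\<^sup>2" by (simp add: power2_eq_square powr_add[symmetric])
    also have "2 powr p * (x powr (p/2))\<^sup>2 \<le> 2 powr p * (C / real n)\<^sup>2"
      using sq by (rule mult_left_mono) simp
    also have "(C / real n)\<^sup>2 = C\<^sup>2 * inverse (real n ^ 2)" by (simp add: power_divide field_simps)
    finally show ?thesis by (simp only: mult.assoc)
  qed simp
  have "summable (\<lambda>m. inverse (real (Suc m) ^ 2))"
    using inverse_power_summable[of 2, where 'a=real] by (subst summable_Suc_iff) simp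
  then have "summable (\<lambda>m. 2 powr p * C\<^sup>2 * inverse (real (Suc m) ^ 2))" by (rule summable_mult)
  then show ?thesis
  proof (rule summable_comparison_test'[where N=0])
    show "norm (mu (Suc m) powr p) \<le> 2 powr p * C\<^sup>2 * inverse (real (Suc m) ^ 2)" for m
      using decay[of "Suc m"] by simp
  qed
qed

text \<open>If \<open>lam 1 = lam 2\<close>, then in dimension \<open>d\<close> the \<open>d + 1\<close> multi-indices
  \<open>(1,\<dots>,1,2,\<dots>,2)\<close> all carry the largest eigenvalue.\<close>

lemma dim_le_info_compl_if_mu2_eq_1:
  assumes m2: "mu 2 = 1" and d: "d \<ge> 1"
  shows "Suc d \<le> info_compl lam I (1/2 * eps_init lam I d) d"
proof -
  define k :: "nat \<Rightarrow> nat \<Rightarrow> nat"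
    where "k j = (\<lambda>l. if l \<in> {1..d} then (if j \<le> l then 2 else 1) else 0)" for j
  have "card {1..Suc d} \<le> info_compl lam I (1/2 * eps_init lam I d) d"
  proof (rule info_compl_ge)
    show "inj_on k {1..Suc d}"
    proof (rule inj_onI)
      fix j j' assume j: "j \<in> {1..Suc d}" "j' \<in> {1..Suc d}" and eq: "k j = k j'"
      have "k j (min j j') = k j' (min j j')" using eq by simp
      then show "j = j'" using j unfolding k_def by (auto split: if_splits simp: min_def)
    qed
    fix j assume j: "j \<in> {1..Suc d}"
    have "k j \<in> nabla_sym (\<lambda>_. I d) d"
      using I_sub[OF d] unfolding nabla_sym_def k_def by (auto simp: subset_iff)
    moreover have "(\<Prod>l\<in>{1..d}. mu (k j l)) = 1"
      by (rule prod.neutral) (use mu_1 m2 in \<open>auto simp: k_def\<close>)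
    ultimately show "k j \<in> sym_superlevel mu (I d) d ((1/2)\<^sup>2)"
      unfolding sym_superlevel_def by (simp add: power2_eq_square)
  qed (use d in auto)
  then show ?thesis by simp
qed

lemma mu2_lt_1_if_strong_bound:
  assumes bnd: "\<And>d e. d \<ge> 1 \<Longrightarrow> e \<in> {0<..1} \<Longrightarrow>
      real (info_compl lam I (e * eps_init lam I d) d) \<le> C * e powr (-p)"
  shows "mu 2 < 1"
proof (rule ccontr)
  assume "\<not> mu 2 < 1"
  then have m2: "mu 2 = 1" using mu01[of 2] by simp
  define d where "d = nat \<lceil>C * (1/2) powr (-p)\<rceil> + 1"
  have "real (Suc d) \<le> real (info_compl lam I (1/2 * eps_init lam I d) d)"
    using dim_le_info_compl_if_mu2_eq_1[OF m2, of d] unfolding d_def by simp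
  also have "\<dots> \<le> C * (1/2) powr (-p)" using bnd[of d "1/2"] unfolding d_def by simp
  finally show False unfolding d_def by linarith
qed

text \<open>Raising any \<open>s\<close> of the \<open>d - |I d|\<close> unsymmetrized coordinates from \<open>1\<close> to \<open>2\<close> gives
  \<open>(d - |I d| choose s)\<close> multi-indices with normalized eigenvalue \<open>mu 2 ^ s\<close>.\<close>

lemma binomial_le_info_compl:
  assumes d: "d \<ge> 1" and s: "s \<le> card ({1..d} - I d)"
  shows "card ({1..d} - I d) choose s \<le> info_compl lam I (sqrt (mu 2 ^ s / 2) * eps_init lam I d) d"
proof -
  define F where "F = {1..d} - I d"
  define e where "e = sqrt (mu 2 ^ s / 2)"
  have ms: "0 < mu 2 ^ s" using mu2_pos by simp
  have e: "e > 0" "e\<^sup>2 = mu 2 ^ s / 2" unfolding e_def using ms by auto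
  define X where "X = {T. T \<subseteq> F \<and> card T = s}"
  define k :: "nat set \<Rightarrow> nat \<Rightarrow> nat"
    where "k T = (\<lambda>l. if l \<in> {1..d} then (if l \<in> T then 2 else 1) else 0)" for T
  have "card X \<le> info_compl lam I (e * eps_init lam I d) d"
  proof (rule info_compl_ge)
    show "finite X" unfolding X_def F_def by simp
    show "inj_on k X"
    proof (rule inj_onI)
      fix T T' assume T: "T \<in> X" "T' \<in> X" and eq: "k T = k T'"
      have "T = {l \<in> {1..d}. k T l = 2}" using T(1) unfolding X_def F_def k_def by auto
      also have "\<dots> = {l \<in> {1..d}. k T' l = 2}" using eq by simp
      also have "\<dots> = T'" using T(2) unfolding X_def F_def k_def by auto
      finally show "T = T'" .
    qed
    fix T assume "T \<in> X"
    then have T: "T \<subseteq> F" "card T = s" unfolding X_def by auto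
    have "k T \<in> nabla_sym (\<lambda>_. I d) d"
      using T(1) I_sub[OF d] unfolding nabla_sym_def k_def F_def by (auto simp: subset_iff)
    moreover have "(\<Prod>l\<in>{1..d}. mu (k T l)) = (\<Prod>l\<in>T. mu 2)"
      using T(1) mu_1 unfolding k_def F_def by (intro prod.mono_neutral_cong_right) auto
    ultimately show "k T \<in> sym_superlevel mu (I d) d (e\<^sup>2)"
      unfolding sym_superlevel_def using T(2) e ms by simp
  qed (use d e in auto)
  moreover have "card X = card F choose s" unfolding X_def F_def by (simp add: n_subsets)
  ultimately show ?thesis unfolding F_def e_def by simp
qed

text \<open>Under a polynomial bound \<open>C * e^(-p) * d^q\<close> the previous lemma bounds the binomial
  coefficients of \<open>d - |I d|\<close>, which by \<open>binomial_growth_bound\<close> makes \<open>d - |I d|\<close> logarithmic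
  in \<open>d\<close> (and bounded when \<open>q = 0\<close>).\<close>

lemma codim_log_bound:
  assumes p: "p > 0" and C: "C > 0" and d: "d \<ge> 1"
    and bnd: "\<And>e. e \<in> {0<..1} \<Longrightarrow>
      real (info_compl lam I (e * eps_init lam I d) d) \<le> C * e powr (-p) * real d powr q"
  shows "real (d - card (I d))
    \<le> 2 * mu 2 powr (-p/2) * (1 + (ln (C * 2 powr (p/2)) + q * ln (real d)) / ln 2)"
proof -
  define A where "A = mu 2 powr (-p/2)"
  define b where "b = card ({1..d} - I d)"
  have m2: "0 < mu 2" "mu 2 \<le> 1" using mu2_pos mu01[of 2] by auto
  have A: "A \<ge> 1"
  proof -
    have "mu 2 powr (p/2) \<le> 1" "mu 2 powr (p/2) > 0" using m2 p by (auto intro: powr_le1)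
    then show ?thesis unfolding A_def by (simp add: powr_minus_divide)
  qed
  have b: "b = d - card (I d)"
    unfolding b_def using I_sub[OF d] by (simp add: card_Diff_subset finite_subset)
  have "real (b choose s) \<le> (C * 2 powr (p/2) * real d powr q) * A ^ s" if s: "s \<le> b" for s
  proof -
    define e where "e = sqrt (mu 2 ^ s / 2)"
    have ms: "0 < mu 2 ^ s" "mu 2 ^ s \<le> 1" using m2 by (auto simp: power_le_one)
    have e: "e \<in> {0<..1}" unfolding e_def using ms by auto
    have "real (b choose s) \<le> real (info_compl lam I (e * eps_init lam I d) d)"
      using binomial_le_info_compl[OF d s[unfolded b_def]] unfolding b_def e_def by simp
    also have "\<dots> \<le> C * e powr (-p) * real d powr q" by (rule bnd[OF e])
    also have "e powr (-p) = 2 powr (p/2) * A ^ s"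
    proof -
      have "e powr (-p) = (mu 2 ^ s) powr (-p/2) / 2 powr (-p/2)"
        unfolding e_def using ms by (simp add: sqrt_powr powr_divide)
      also have "(mu 2 ^ s) powr (-p/2) = A ^ s"
        using m2 unfolding A_def by (simp add: powr_realpow[symmetric] powr_powr powr_power mult.commute)
      finally show ?thesis by (simp add: powr_minus_divide)
    qed
    finally show ?thesis by (simp add: mult_ac)
  qed
  then have "real b < 2 * A * (1 + ln (C * 2 powr (p/2) * real d powr q) / ln 2)"
    by (rule binomial_growth_bound[OF A])
  also have "ln (C * 2 powr (p/2) * real d powr q) = ln (C * 2 powr (p/2)) + q * ln (real d)"
    using C d by (simp add: ln_mult ln_powr)
  finally show ?thesis unfolding A_def b by simp
qed

end

context sym_tensor_problem
begin

lemma poly_tractable_necessary: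
  assumes "poly_tractable lam I"
  shows "(\<exists>\<tau>>0. summable (\<lambda>m. lam (Suc m) powr \<tau>))"
    and "(\<lambda>d. real (d - card (I d))) \<in> O(\<lambda>d. ln (real d))"
proof -
  obtain C p q where C: "C > 0" and p: "p > 0" and q: "q \<ge> 0"
    and bnd: "\<And>d e. d \<ge> 1 \<Longrightarrow> e \<in> {0<..1} \<Longrightarrow>
      real (info_compl lam I (e * eps_init lam I d) d) \<le> C * e powr (-p) * real d powr q"
    using assms unfolding poly_tractable_def by blast
  have "summable (\<lambda>m. mu (Suc m) powr p)"
    using bnd[of 1] by (intro summable_if_bounded_dim1[OF p]) simp
  then show "\<exists>\<tau>>0. summable (\<lambda>m. lam (Suc m) powr \<tau>)"
    using p summable_lam_iff_mu by blast
  define A where "A = mu 2 powr (-p/2)"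
  have "real (d - card (I d))
      \<le> 2 * A * (1 + ln (C * 2 powr (p/2)) / ln 2) + (2 * A * q / ln 2) * ln (real d)"
    if "d \<ge> 1" for d
    using codim_log_bound[OF p C that bnd[OF that]] unfolding A_def by (simp add: field_simps)
  moreover have "2 * A * q / ln 2 \<ge> 0" unfolding A_def using q by simp
  ultimately show "(\<lambda>d. real (d - card (I d))) \<in> O(\<lambda>d. ln (real d))"
    by (intro bigo_ln_if_affine_ln_bound) auto
qed

lemma strongly_poly_tractable_necessary:
  assumes "strongly_poly_tractable lam I"
  shows "(\<exists>\<tau>>0. summable (\<lambda>m. lam (Suc m) powr \<tau>))" and "lam 1 > lam 2"
    and "(\<lambda>d. real (d - card (I d))) \<in> O(\<lambda>_. 1)"
proof -
  obtain C p where C: "C > 0" and p: "p > 0"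
    and bnd: "\<And>d e. d \<ge> 1 \<Longrightarrow> e \<in> {0<..1} \<Longrightarrow>
      real (info_compl lam I (e * eps_init lam I d) d) \<le> C * e powr (-p)"
    using assms unfolding strongly_poly_tractable_def by blast
  have bnd0: "real (info_compl lam I (e * eps_init lam I d) d) \<le> C * e powr (-p) * real d powr 0"
    if "d \<ge> 1" "e \<in> {0<..1}" for d e
    using bnd[OF that] that(1) by simp
  have "poly_tractable lam I"
    unfolding poly_tractable_def using C p bnd0 by (intro exI[of _ C] exI[of _ p] exI[of _ 0]) auto
  then show "\<exists>\<tau>>0. summable (\<lambda>m. lam (Suc m) powr \<tau>)"
    by (rule poly_tractable_necessary(1))
  have "mu 2 < 1" using bnd by (rule mu2_lt_1_if_strong_bound)
  then show "lam 1 > lam 2" using lam1_pos unfolding mu_def by simp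
  define K where "K = 2 * mu 2 powr (-p/2) * (1 + ln (C * 2 powr (p/2)) / ln 2)"
  have bounded: "real (d - card (I d)) \<le> K" if "d \<ge> 1" for d
    using codim_log_bound[OF p C that bnd0[OF that]] unfolding K_def by simp
  have "eventually (\<lambda>d. norm (real (d - card (I d))) \<le> (\<bar>K\<bar> + 1) * norm (1::real)) at_top"
    using eventually_ge_at_top[of "1::nat"]
  proof eventually_elim
    case (elim d)
    show ?case using bounded[OF elim] by simp
  qed
  then show "(\<lambda>d. real (d - card (I d))) \<in> O(\<lambda>_. 1)"
    by (intro landau_o.bigI[of "\<bar>K\<bar> + 1"]) auto
qed

text \<open>For the converse directions choose \<open>M\<close> with \<open>mu m \<le> \<rho> < 1\<close> beyond \<open>M\<close>: \<open>M = 1\<close>,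
  \<open>\<rho> = mu 2\<close> when \<open>lam 1 > lam 2\<close>; otherwise any \<open>M\<close> with \<open>mu m \<le> 1/2\<close> for \<open>m > M\<close>,
  which costs the polynomial factor \<open>(|I d|+1)^(M-1) \<le> (2d)^(M-1)\<close>.\<close>

lemma strongly_poly_tractable_sufficient:
  assumes summ: "summable (\<lambda>m. lam (Suc m) powr \<tau>)" and tau: "\<tau> > 0" and gap: "lam 1 > lam 2"
    and codim: "(\<lambda>d. real (d - card (I d))) \<in> O(\<lambda>_. 1)"
  shows "strongly_poly_tractable lam I"
proof -
  have summ_mu: "summable (\<lambda>m. mu (Suc m) powr \<tau>)" using summ summable_lam_iff_mu by blast
  define S where "S = (\<Sum>m. mu (Suc m) powr \<tau>)"
  have S: "S \<ge> 1" unfolding S_def by (rule mu_powr_sum_ge_1[OF summ_mu])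
  obtain B where B: "\<And>d. d - card (I d) \<le> B" using bounded_if_bigo_1[OF codim] by blast
  have m2: "mu 2 < 1" using gap lam1_pos unfolding mu_def by simp
  have rho: "mu m \<le> mu 2" if "1 < m" for m using that by (intro mu_antimono) auto
  obtain C p where C: "C > 0" and p: "p > 0"
    and ub: "\<And>d e. d \<ge> 1 \<Longrightarrow> e \<in> {0<..1} \<Longrightarrow> real (info_compl lam I (e * eps_init lam I d) d)
       \<le> real ((card (I d) + 1) ^ (1 - 1)) * C * S ^ (d - card (I d)) * e powr (-p)"
    using info_compl_upper[OF tau summ_mu mu2_pos m2 rho, folded S_def] by blast
  have "real (info_compl lam I (e * eps_init lam I d) d) \<le> (C * S ^ B) * e powr (-p)"
    if "d \<ge> 1" "e \<in> {0<..1}" for d e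
  proof -
    have "real (info_compl lam I (e * eps_init lam I d) d) \<le> C * S ^ (d - card (I d)) * e powr (-p)"
      using ub[OF that] by simp
    also have "\<dots> \<le> C * S ^ B * e powr (-p)"
      using C S B[of d] by (intro mult_right_mono mult_left_mono power_increasing) auto
    finally show ?thesis .
  qed
  moreover have "C * S ^ B > 0" using C S by simp
  ultimately show ?thesis unfolding strongly_poly_tractable_def using p by blast
qed

lemma poly_tractable_sufficient:
  assumes summ: "summable (\<lambda>m. lam (Suc m) powr \<tau>)" and tau: "\<tau> > 0"
    and codim: "(\<lambda>d. real (d - card (I d))) \<in> O(\<lambda>d. ln (real d))"
  shows "poly_tractable lam I"
proof -
  have summ_mu: "summable (\<lambda>m. mu (Suc m) powr \<tau>)" using summ summable_lam_iff_mu by blast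
  define S where "S = (\<Sum>m. mu (Suc m) powr \<tau>)"
  have S: "S \<ge> 1" unfolding S_def by (rule mu_powr_sum_ge_1[OF summ_mu])
  obtain M0 where M0: "\<And>m. m \<ge> M0 \<Longrightarrow> mu m < 1/2"
    using order_tendstoD(2)[OF mu_lim, of "1/2"] by (auto simp: eventually_sequentially)
  define M where "M = max M0 1"
  have rho: "mu m \<le> 1/2" if "M < m" for m using M0[of m] that unfolding M_def by simp
  have half: "(0::real) < 1/2" "(1/2::real) < 1" by simp_all
  obtain C p where C: "C > 0" and p: "p > 0"
    and ub: "\<And>d e. d \<ge> 1 \<Longrightarrow> e \<in> {0<..1} \<Longrightarrow> real (info_compl lam I (e * eps_init lam I d) d)
       \<le> real ((card (I d) + 1) ^ (M - 1)) * C * S ^ (d - card (I d)) * e powr (-p)"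
    using info_compl_upper[OF tau summ_mu half rho, folded S_def] by blast
  obtain C' q where C': "C' \<ge> 1" and q: "q \<ge> 0"
    and pow: "\<And>d. d \<ge> 1 \<Longrightarrow> S ^ (d - card (I d)) \<le> C' * real d powr q"
    using pow_le_poly_if_bigo_ln[OF codim S] by blast
  have "real (info_compl lam I (e * eps_init lam I d) d)
      \<le> (2 ^ (M - 1) * C * C') * e powr (-p) * real d powr (real (M - 1) + q)"
    if d: "d \<ge> 1" and e: "e \<in> {0<..1}" for d e
  proof -
    have "card (I d) \<le> d" using card_mono[OF _ I_sub[OF d]] by simp
    then have "real (card (I d) + 1) \<le> 2 * real d" using d by simp
    then have "real ((card (I d) + 1) ^ (M - 1)) \<le> (2 * real d) ^ (M - 1)"
      unfolding of_nat_power by (rule power_mono) simp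
    also have "\<dots> = 2 ^ (M - 1) * real d powr real (M - 1)"
      using d by (simp add: power_mult_distrib powr_realpow)
    finally have card_pow: "real ((card (I d) + 1) ^ (M - 1)) \<le> 2 ^ (M - 1) * real d powr real (M - 1)" .
    have "real (info_compl lam I (e * eps_init lam I d) d)
        \<le> real ((card (I d) + 1) ^ (M - 1)) * C * S ^ (d - card (I d)) * e powr (-p)"
      by (rule ub[OF d e])
    also have "\<dots> \<le> (2 ^ (M - 1) * real d powr real (M - 1)) * C * (C' * real d powr q) * e powr (-p)"
      using card_pow pow[OF d] C S by (intro mult_mono mult_right_mono) auto
    also have "\<dots> = (2 ^ (M - 1) * C * C') * e powr (-p) * real d powr (real (M - 1) + q)"
      by (simp add: powr_add mult_ac)
    finally show ?thesis .
  qed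
  moreover have "2 ^ (M - 1) * C * C' > 0" using C C' by simp
  ultimately show ?thesis unfolding poly_tractable_def using p q by (meson add_nonneg_nonneg of_nat_0_le_iff)
qed

end

theorem theorem3:
  fixes lam :: "nat \<Rightarrow> real" and I :: "nat \<Rightarrow> nat set"
  assumes nonneg: "\<And>m. m \<ge> 1 \<Longrightarrow> lam m \<ge> 0"
    and noninc: "\<And>m. m \<ge> 1 \<Longrightarrow> lam (Suc m) \<le> lam m"
    and to_zero: "lam \<longlonglongrightarrow> 0"
    and lam2_pos: "lam 2 > 0"
    and I_sub: "\<And>d. d \<ge> 1 \<Longrightarrow> I d \<subseteq> {1..d}"
    and I_ne: "\<And>d. d \<ge> 1 \<Longrightarrow> I d \<noteq> {}"
    and I_1: "I 1 = {1}"
    and init_pos: "\<And>d. d \<ge> 1 \<Longrightarrow> eps_init lam I d > 0"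
  shows "(strongly_poly_tractable lam I \<longleftrightarrow>
            (\<exists>\<tau>>0. summable (\<lambda>m. lam (Suc m) powr \<tau>)) \<and> lam 1 > lam 2 \<and>
            (\<lambda>d. real (d - card (I d))) \<in> O(\<lambda>_. 1))
       \<and> (poly_tractable lam I \<longleftrightarrow>
            (\<exists>\<tau>>0. summable (\<lambda>m. lam (Suc m) powr \<tau>)) \<and>
            (\<lambda>d. real (d - card (I d))) \<in> O(\<lambda>d. ln (real d)))"
proof -
  interpret sym_tensor_problem lam I
    using nonneg noninc to_zero lam2_pos I_sub by unfold_locales
  show ?thesis
    using strongly_poly_tractable_necessary strongly_poly_tractable_sufficient
      poly_tractable_necessary poly_tractable_sufficient by blast
qed

end
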